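(* In the setting of the context, for distinct $p,a\in C$, $\operatorname{diam}_{S_p}(\pi_p(a))\le 4\delta$. In particular Axiom (P1) holds for the data $(\{S_p\}_{p\in C},\{\pi_p\})$ with any constant $\theta\ge4\delta$.
   Context: $X$ is a $\delta$-hyperbolic geodesic metric space ($\delta>0$, every geodesic triangle $\delta$-thin). $G$ acts on $X$ by isometries and $\mathcal{C}=(C,\{G_c\})$ is a $\rho$-separated fairly rotating family with $\rho\ge20\delta$ (i.e. $C\subseteq X$ is $G$-invariant, $G_c$ fixes $c$, $G_{gc}=gG_cg^{-1}$, distinct points of $C$ are at distance $\ge\rho$, and for $c\in C$, $g\in G_c\setminus\{1\}$, $x\in C\setminus\{c\}$ some geodesic from $x$ to $gx$ meets the closed $1$-ball about $c$). Fix $2+2\delta\le R\le\frac\rho2-3\delta$. For $p\in C$, $S_p=\{x:d(x,p)=R\}$ with metric $d_{S_p}(x,y)=$ infimum of lengths of paths from $x$ to $y$ in $X\setminus B_R(p)$ (possibly $\infty$), where $B_R(p)$ is the open ball. For $a$ with $d(a,p)\ge R$, $\pi_p(a)\subseteq S_p$ is the set of points where geodesics $[p,a]$ meet $S_p$ (equivalently nearest-point projections of $a$ to $S_p$). *)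

theory Defs
  imports Complex_Main "HOL-Library.Extended_Real" "HOL-Algebra.Group"
begin

definition geodesic_seg :: "'a::metric_space \<Rightarrow> 'a \<Rightarrow> 'a set \<Rightarrow> bool" where
  "geodesic_seg x y S \<longleftrightarrow> (\<exists>\<gamma>::real \<Rightarrow> 'a. \<gamma> 0 = x \<and> \<gamma> (dist x y) = y \<and>
      (\<forall>s\<in>{0..dist x y}. \<forall>t\<in>{0..dist x y}. dist (\<gamma> s) (\<gamma> t) = \<bar>s - t\<bar>) \<and>
      S = \<gamma> ` {0..dist x y})"

definition geodesic_space :: "'a::metric_space itself \<Rightarrow> bool" where
  "geodesic_space _ \<longleftrightarrow> (\<forall>x y::'a. \<exists>S. geodesic_seg x y S)"

definition hyperbolic :: "'a::metric_space itself \<Rightarrow> real \<Rightarrow> bool" where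
  "hyperbolic _ \<delta> \<longleftrightarrow> (\<forall>(x::'a) y z A B D. geodesic_seg x y A \<and> geodesic_seg y z B \<and> geodesic_seg x z D
      \<longrightarrow> (\<forall>u\<in>A. \<exists>v\<in>B \<union> D. dist u v \<le> \<delta>))"

definition path_length :: "(real \<Rightarrow> 'a::metric_space) \<Rightarrow> ereal" where
  "path_length \<gamma> = (SUP ts \<in> {ts. sorted ts \<and> set ts \<subseteq> {0..1}}.
      ereal (\<Sum>i<length ts - 1. dist (\<gamma> (ts ! i)) (\<gamma> (ts ! Suc i))))"

text \<open>Path metric on S_p: infimum of lengths of paths from x to y avoiding the open ball B_R(p)
  (infinity if there is none).\<close>
definition dS :: "'a::metric_space \<Rightarrow> real \<Rightarrow> 'a \<Rightarrow> 'a \<Rightarrow> ereal" where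
  "dS p R x y = (INF \<gamma> \<in> {\<gamma>::real \<Rightarrow> 'a. continuous_on {0..1} \<gamma> \<and> \<gamma> 0 = x \<and> \<gamma> 1 = y \<and>
        \<gamma> ` {0..1} \<subseteq> {z. \<not> dist p z < R}}. path_length \<gamma>)"

definition proj :: "'a::metric_space \<Rightarrow> real \<Rightarrow> 'a \<Rightarrow> 'a set" where
  "proj p R a = {x. \<exists>A. geodesic_seg p a A \<and> x \<in> A \<and> dist x p = R}"

definition diamS :: "'a::metric_space \<Rightarrow> real \<Rightarrow> 'a set \<Rightarrow> ereal" where
  "diamS p R Y = (SUP x \<in> Y. SUP y \<in> Y. dS p R x y)"

end

theory Submission
  imports Defs "HOL-Analysis.Lipschitz"
begin

text \<open>Two points \<open>x, y\<close> of \<open>\<pi>\<^sub>p(a)\<close> lie on geodesics \<open>[p,a]\<close>. Since \<open>a\<close> is far from \<open>p\<close>, thinness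
  of the bigon formed by these geodesics puts the point at distance \<open>R + \<delta>\<close> from \<open>p\<close> on the first
  within \<open>\<delta>\<close> of a point of the second, whose distance from \<open>p\<close> is then in \<open>[R, R + 2\<delta>]\<close>. Going out
  along the first geodesic, across, and back in along the second gives a path outside the open
  ball \<open>B\<^sub>R(p)\<close> of length at most \<open>\<delta> + \<delta> + 2\<delta>\<close>.\<close>

lemma path_length_le_lipschitz:
  fixes \<gamma> :: "real \<Rightarrow> 'a::metric_space"
  assumes lip: "L-lipschitz_on {0..1} \<gamma>"
  shows "path_length \<gamma> \<le> ereal L"
  unfolding path_length_def
proof (rule SUP_least)
  fix ts :: "real list" assume "ts \<in> {ts. sorted ts \<and> set ts \<subseteq> {0..1}}"
  hence sorted: "sorted ts" and range: "set ts \<subseteq> {0..1}" by auto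
  define n where "n = length ts"
  have L0: "L \<ge> 0" using lipschitz_on_nonneg[OF lip] .
  show "ereal (\<Sum>i<length ts - 1. dist (\<gamma> (ts ! i)) (\<gamma> (ts ! Suc i))) \<le> ereal L"
  proof (cases "n = 0")
    case True thus ?thesis using L0 by (simp add: n_def)
  next
    case False
    have in01: "ts ! i \<in> {0..1}" if "i < n" for i using range that n_def nth_mem by blast
    have step: "dist (\<gamma> (ts ! i)) (\<gamma> (ts ! Suc i)) \<le> L * (ts ! Suc i - ts ! i)" if "i < n - 1" for i
    proof -
      have "ts ! i \<le> ts ! Suc i" using sorted_nth_mono[OF sorted, of i "Suc i"] that n_def by simp
      thus ?thesis using lipschitz_onD[OF lip, of "ts ! i" "ts ! Suc i"] in01 that
        by (simp add: dist_real_def)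
    qed
    have "(\<Sum>i<n - 1. dist (\<gamma> (ts ! i)) (\<gamma> (ts ! Suc i))) \<le> (\<Sum>i<n - 1. L * (ts ! Suc i - ts ! i))"
      by (rule sum_mono) (use step in auto)
    also have "\<dots> = L * (ts ! (n - 1) - ts ! 0)"
      by (simp add: sum_distrib_left[symmetric] sum_lessThan_telescope)
    also have "\<dots> \<le> L * 1"
      using in01[of "n - 1"] in01[of 0] False L0 by (intro mult_left_mono) auto
    finally show ?thesis by (simp add: n_def)
  qed
qed

lemma dS_le_lipschitz_path:
  fixes P :: "real \<Rightarrow> 'a::metric_space"
  assumes lip: "1-lipschitz_on {0..L} P" and L0: "L \<ge> 0"
    and ends: "P 0 = x" "P L = y"
    and outside: "\<And>s. s \<in> {0..L} \<Longrightarrow> R \<le> dist p (P s)"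
  shows "dS p R x y \<le> ereal L"
proof -
  define \<gamma> where "\<gamma> t = P (L * t)" for t
  have scale: "(\<lambda>t. L * t) ` {0..1} \<subseteq> {0..L}" using L0 by (auto intro: mult_left_le)
  have "(1 * L)-lipschitz_on {0..1} \<gamma>"
    unfolding \<gamma>_def
    by (rule lipschitz_on_compose2[OF _ lipschitz_on_subset[OF lip scale]])
      (use L0 lipschitz_on_cmult_real_nonneg[OF lipschitz_on_id] in simp)
  hence lip\<gamma>: "L-lipschitz_on {0..1} \<gamma>" by simp
  have "\<gamma> ` {0..1} \<subseteq> {z. \<not> dist p z < R}"
    using scale outside by (force simp: \<gamma>_def)
  hence "dS p R x y \<le> path_length \<gamma>"
    unfolding dS_def
    using lipschitz_on_continuous_on[OF lip\<gamma>] ends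
    by (intro INF_lower) (auto simp: \<gamma>_def)
  also have "\<dots> \<le> ereal L" by (rule path_length_le_lipschitz[OF lip\<gamma>])
  finally show ?thesis .
qed

lemma geodesic_seg_through:
  assumes "geodesic_seg p a A" "x \<in> A" "dist x p = R"
  obtains g where "g 0 = p"
    "\<forall>s\<in>{0..dist p a}. \<forall>t\<in>{0..dist p a}. dist (g s) (g t) = \<bar>s - t\<bar>"
    "A = g ` {0..dist p a}" "x = g R"
proof -
  obtain g where g: "g 0 = p"
    "\<forall>s\<in>{0..dist p a}. \<forall>t\<in>{0..dist p a}. dist (g s) (g t) = \<bar>s - t\<bar>"
    "A = g ` {0..dist p a}" using assms(1) unfolding geodesic_seg_def by blast
  then obtain s where s: "s \<in> {0..dist p a}" "x = g s" using assms(2) by auto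
  have "dist (g 0) (g s) = s" using g(2) s(1) by force
  hence "s = R" using assms(3) s g(1) by (simp add: dist_commute)
  thus ?thesis using that g s by auto
qed

text \<open>A geodesic bigon is the degenerate triangle with third side the point \<open>{a}\<close>.\<close>

lemma hyperbolic_bigon_thin:
  fixes p a :: "'a::metric_space"
  assumes hyp: "hyperbolic TYPE('a) \<delta>"
    and A1: "geodesic_seg p a A1" and A2: "geodesic_seg p a A2"
    and u: "u \<in> A1" and far: "dist u a > \<delta>"
  obtains v where "v \<in> A2" "dist u v \<le> \<delta>"
proof -
  have "geodesic_seg a a {a}" unfolding geodesic_seg_def by (rule exI[of _ "\<lambda>_. a"]) auto
  hence "\<exists>v\<in>{a} \<union> A2. dist u v \<le> \<delta>"
    using hyp[unfolded hyperbolic_def, rule_format, of p a A1 a "{a}" A2] A1 A2 u by blast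
  then obtain v where "v \<in> {a} \<union> A2" "dist u v \<le> \<delta>" by blast
  moreover have "v \<noteq> a" using calculation far by auto
  ultimately show ?thesis using that by blast
qed

text \<open>Leave the sphere along \<open>g1\<close> up to radius \<open>R + d\<close>, cross over to \<open>g2\<close> along \<open>h\<close>
  (which stays outside the ball because \<open>e \<le> d\<close>), and return along \<open>g2\<close>.\<close>

lemma dS_le_detour:
  fixes g1 g2 h :: "real \<Rightarrow> 'a::metric_space"
  assumes g1: "g1 0 = p" "\<forall>s\<in>{0..D}. \<forall>t\<in>{0..D}. dist (g1 s) (g1 t) = \<bar>s - t\<bar>"
    and g2: "g2 0 = p" "\<forall>s\<in>{0..D}. \<forall>t\<in>{0..D}. dist (g2 s) (g2 t) = \<bar>s - t\<bar>"
    and h: "h 0 = g1 (R + d)" "h e = g2 u" "\<forall>s\<in>{0..e}. \<forall>t\<in>{0..e}. dist (h s) (h t) = \<bar>s - t\<bar>"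
    and R0: "0 \<le> R" and e: "0 \<le> e" "e \<le> d" and RD: "R + d \<le> D" and u: "R \<le> u" "u \<le> D"
  shows "dS p R (g1 R) (g2 R) \<le> ereal (d + e + (u - R))"
proof -
  have dist_g1: "dist p (g1 w) = w" if "w \<in> {0..D}" for w using g1 that by force
  have dist_g2: "dist p (g2 w) = w" if "w \<in> {0..D}" for w using g2 that by force
  define L where "L = d + e + (u - R)"
  define Q where "Q s = (if s \<le> d + e then h (s - d) else g2 (u + d + e - s))" for s
  define P where "P s = (if s \<le> d then g1 (R + s) else Q s)" for s
  have lip1: "1-lipschitz_on {0..d} (\<lambda>s. g1 (R + s))"
    by (rule lipschitz_onI) (use g1(2) R0 RD in \<open>auto simp: dist_real_def\<close>)
  have lip2: "1-lipschitz_on {d..d + e} (\<lambda>s. h (s - d))"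
    by (rule lipschitz_onI) (use h(3) in \<open>auto simp: dist_real_def\<close>)
  have lip3: "1-lipschitz_on {d + e..L} (\<lambda>s. g2 (u + d + e - s))"
    by (rule lipschitz_onI) (use g2(2) u R0 in \<open>auto simp: dist_real_def L_def\<close>)
  have "1-lipschitz_on {d..L} Q"
    unfolding Q_def by (rule lipschitz_on_concat[OF lip2 lip3]) (simp add: h(2))
  hence lipP: "1-lipschitz_on {0..L} P"
    unfolding P_def by (rule lipschitz_on_concat[OF lip1]) (simp add: Q_def h(1) e(1))
  have outside: "R \<le> dist p (P s)" if s: "s \<in> {0..L}" for s
  proof -
    consider "s \<le> d" | "d < s" "s \<le> d + e" | "d + e < s" by linarith
    thus ?thesis
    proof cases
      case 1 thus ?thesis using s R0 RD dist_g1[of "R + s"] by (simp add: P_def)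
    next
      case 2
      hence "dist (h 0) (h (s - d)) = s - d" using h(3) by force
      moreover have "dist p (h 0) = R + d" using h(1) dist_g1 R0 e RD by simp
      ultimately show ?thesis using 2 e dist_triangle[of p "h 0" "h (s - d)"]
        by (simp add: P_def Q_def dist_commute)
    next
      case 3
      hence "u + d + e - s \<in> {0..D}" "R \<le> u + d + e - s" using s u R0 e by (auto simp: L_def)
      thus ?thesis using 3 e dist_g2 by (simp add: P_def Q_def)
    qed
  qed
  have "P 0 = g1 R" using e by (simp add: P_def)
  moreover have "P L = g2 R"
  proof -
    have "Q L = g2 (u + d + e - L)" using u h(2) by (simp add: Q_def L_def)
    moreover have "P L = Q L" using e u h(1) by (simp add: P_def Q_def L_def)
    ultimately show ?thesis by (simp add: L_def)
  qed
  moreover have "L \<ge> 0" using e u by (simp add: L_def)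
  ultimately show ?thesis using dS_le_lipschitz_path[OF lipP] outside by (simp add: L_def)
qed

lemma dS_proj_le:
  fixes p a :: "'a::metric_space"
  assumes geod: "geodesic_space TYPE('a)" and hyp: "hyperbolic TYPE('a) \<delta>" and \<delta>0: "\<delta> > 0"
    and R0: "R \<ge> 0" and far: "dist p a > R + 2 * \<delta>"
    and x: "x \<in> proj p R a" and y: "y \<in> proj p R a"
  shows "dS p R x y \<le> ereal (4 * \<delta>)"
proof -
  define D where "D = dist p a"
  obtain A1 where A1: "geodesic_seg p a A1" "x \<in> A1" "dist x p = R"
    using x unfolding proj_def by blast
  obtain g1 where g1: "g1 0 = p" "\<forall>s\<in>{0..D}. \<forall>t\<in>{0..D}. dist (g1 s) (g1 t) = \<bar>s - t\<bar>"
    "A1 = g1 ` {0..D}" "x = g1 R"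
    using geodesic_seg_through[OF A1] unfolding D_def by metis
  obtain A2 where A2: "geodesic_seg p a A2" "y \<in> A2" "dist y p = R"
    using y unfolding proj_def by blast
  obtain g2 where g2: "g2 0 = p" "\<forall>s\<in>{0..D}. \<forall>t\<in>{0..D}. dist (g2 s) (g2 t) = \<bar>s - t\<bar>"
    "A2 = g2 ` {0..D}" "y = g2 R"
    using geodesic_seg_through[OF A2] unfolding D_def by metis
  have RD: "R + \<delta> \<le> D" using far \<delta>0 D_def by simp
  define x' where "x' = g1 (R + \<delta>)"
  have dist_x': "dist p x' = R + \<delta>" using g1(1,2) RD R0 \<delta>0 x'_def by force
  have "dist x' a > \<delta>" using dist_triangle[of p a x'] dist_x' far by linarith
  moreover have "x' \<in> A1" using g1(3) x'_def RD R0 \<delta>0 by auto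
  ultimately obtain v where v: "v \<in> A2" "dist x' v \<le> \<delta>"
    using hyperbolic_bigon_thin[OF hyp A1(1) A2(1)] by blast
  then obtain u where u: "u \<in> {0..D}" "v = g2 u" using g2(3) by auto
  have dist_v: "dist p v = u" using g2(1,2) u by force
  have u_hi: "u \<le> R + 2 * \<delta>" using dist_triangle[of p v x'] dist_x' v(2) dist_v by linarith
  have u_lo: "R \<le> u" using dist_triangle[of p x' v] dist_x' v(2) dist_v by (simp add: dist_commute)
  obtain h where h: "h 0 = x'" "h (dist x' v) = v"
    "\<forall>s\<in>{0..dist x' v}. \<forall>t\<in>{0..dist x' v}. dist (h s) (h t) = \<bar>s - t\<bar>"
    using geod unfolding geodesic_space_def geodesic_seg_def by blast
  have "dS p R x y \<le> ereal (\<delta> + dist x' v + (u - R))"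
    unfolding g1(4) g2(4)
    by (rule dS_le_detour[OF g1(1,2) g2(1,2)]) (use h x'_def u u_lo v R0 RD in auto)
  also have "\<dots> \<le> ereal (4 * \<delta>)" using v u_hi by simp
  finally show ?thesis .
qed

theorem lemma3p3:
  fixes G :: "('g, 'b) monoid_scheme"
    and act :: "'g \<Rightarrow> 'a::metric_space \<Rightarrow> 'a"
    and C :: "'a set" and Gc :: "'a \<Rightarrow> 'g set"
    and \<delta> \<rho> R :: real
  assumes geod: "geodesic_space TYPE('a)"
    and hyp: "hyperbolic TYPE('a) \<delta>" and dpos: "\<delta> > 0"
    and grp: "group G"
    and act_one: "\<And>x. act \<one>\<^bsub>G\<^esub> x = x"
    and act_mult: "\<And>g h x. g \<in> carrier G \<Longrightarrow> h \<in> carrier G \<Longrightarrow> act (g \<otimes>\<^bsub>G\<^esub> h) x = act g (act h x)"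
    and act_isom: "\<And>g x y. g \<in> carrier G \<Longrightarrow> dist (act g x) (act g y) = dist x y"
    and C_inv: "\<And>g c. g \<in> carrier G \<Longrightarrow> c \<in> C \<Longrightarrow> act g c \<in> C"
    and Gc_sub: "\<And>c. c \<in> C \<Longrightarrow> subgroup (Gc c) G"
    and Gc_fix: "\<And>c g. c \<in> C \<Longrightarrow> g \<in> Gc c \<Longrightarrow> act g c = c"
    and Gc_conj: "\<And>g c. g \<in> carrier G \<Longrightarrow> c \<in> C \<Longrightarrow>
                   Gc (act g c) = {g \<otimes>\<^bsub>G\<^esub> h \<otimes>\<^bsub>G\<^esub> inv\<^bsub>G\<^esub> g | h. h \<in> Gc c}"
    and sep: "\<And>c c'. c \<in> C \<Longrightarrow> c' \<in> C \<Longrightarrow> c \<noteq> c' \<Longrightarrow> dist c c' \<ge> \<rho>"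
    and rot: "\<And>c g x. c \<in> C \<Longrightarrow> g \<in> Gc c - {\<one>\<^bsub>G\<^esub>} \<Longrightarrow> x \<in> C - {c} \<Longrightarrow>
                (\<exists>S. geodesic_seg x (act g x) S \<and> (\<exists>z\<in>S. dist z c \<le> 1))"
    and rho: "\<rho> \<ge> 20 * \<delta>"
    and R_lo: "2 + 2 * \<delta> \<le> R" and R_hi: "R \<le> \<rho> / 2 - 3 * \<delta>"
  shows "(\<forall>p\<in>C. \<forall>a\<in>C. p \<noteq> a \<longrightarrow> diamS p R (proj p R a) \<le> ereal (4 * \<delta>)) \<and>
         (\<forall>\<theta>. \<theta> \<ge> 4 * \<delta> \<longrightarrow> (\<forall>p\<in>C. \<forall>a\<in>C. p \<noteq> a \<longrightarrow> diamS p R (proj p R a) \<le> ereal \<theta>))"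
proof -
  have diam: "diamS p R (proj p R a) \<le> ereal (4 * \<delta>)" if "p \<in> C" "a \<in> C" "p \<noteq> a" for p a
  proof -
    have "dist p a > R + 2 * \<delta>" using sep[OF that] R_hi R_lo dpos by linarith
    moreover have "R \<ge> 0" using R_lo dpos by linarith
    ultimately show ?thesis
      unfolding diamS_def by (intro SUP_least dS_proj_le[OF geod hyp dpos])
  qed
  thus ?thesis by (meson ereal_less_eq(3) order_trans)
qed

end
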